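(* Let $n\ge2$, $h\ge1$, $0\le l\le (n-1)h$ be integers, $N=nh$, and let $\mathcal{F}=\{p_1,\dots,p_N\}$. For $i=1,\dots,n$ let $B_i=\{p_{(i-1)h+1},\dots,p_{ih}\}$, let $R_i$ be a uniformly random $l$-element subset of $\mathcal{F}\setminus B_i$, the $R_i$ chosen independently, and let $G_i=B_i\cup R_i$, $g=h+l$. Let $\pi=\frac{l}{(n-1)h}$ and $\bar\pi=1-\pi$. Then for any $I\subset\{1,\dots,n\}$ with $|I|=s$ and any $j\in\{1,\dots,n\}\setminus I$, \[ \Omega(s):=E\Bigl[\Bigl|\Bigl(\bigcup_{i\in I}G_i\Bigr)\cap G_j\Bigr|\Bigr]=g\bigl[1-\bar\pi^s\bigr]+sh\,\pi\,\bar\pi^s . \] Moreover, when $n\to\infty$ with $l/h\to\alpha$ and $s/n\to\beta$, writing $\omega(\beta)=\Omega(s)$, one has $\omega(\beta)\to h\bigl[(1+\alpha)(1-e^{-\alpha\beta})+\alpha\beta e^{-\alpha\beta}\bigr]$.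
   Context: This describes the "random annex code": $B_i$ are base generations, $R_i$ random annexes, $G_i$ extended generations. *)

theory Defs
  imports "HOL-Probability.Probability"
begin

text \<open>Random annex code. Points p_1..p_N are identified with the naturals 1..N.\<close>

definition ground :: "nat \<Rightarrow> nat \<Rightarrow> nat set" where
  "ground n h = {1..n*h}"

definition base :: "nat \<Rightarrow> nat \<Rightarrow> nat set" where
  "base h i = {(i - 1) * h + 1 .. i * h}"

definition annex_pmf :: "nat \<Rightarrow> nat \<Rightarrow> nat \<Rightarrow> nat \<Rightarrow> nat set pmf" where
  "annex_pmf n h l i = pmf_of_set {S. S \<subseteq> ground n h - base h i \<and> card S = l}"

definition annexes_pmf :: "nat \<Rightarrow> nat \<Rightarrow> nat \<Rightarrow> (nat \<Rightarrow> nat set) pmf" where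
  "annexes_pmf n h l = Pi_pmf {1..n} {} (\<lambda>i. annex_pmf n h l i)"

definition gen :: "nat \<Rightarrow> (nat \<Rightarrow> nat set) \<Rightarrow> nat \<Rightarrow> nat set" where
  "gen h R i = base h i \<union> R i"

definition Omega :: "nat \<Rightarrow> nat \<Rightarrow> nat \<Rightarrow> nat set \<Rightarrow> nat \<Rightarrow> real" where
  "Omega n h l I j = measure_pmf.expectation (annexes_pmf n h l)
     (\<lambda>R. real (card ((\<Union>i\<in>I. gen h R i) \<inter> gen h R j)))"

end

theory Submission
  imports Defs
begin

text \<open>
  By linearity, \<open>\<Omega>\<close> is the sum over all points \<open>p\<close> of the probability that \<open>p\<close> lies in
  \<open>G\<^sub>j\<close> and in some \<open>G\<^sub>i\<close>, \<open>i \<in> I\<close>. The point \<open>p\<close> belongs to exactly one base \<open>B\<^sub>k\<close>, and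
  for \<open>i \<noteq> k\<close> it lies in \<open>R\<^sub>i\<close> with probability \<open>\<pi>\<close>, since a uniform \<open>l\<close>-subset of
  \<open>(n - 1) h\<close> points contains a fixed point with probability \<open>l / ((n - 1) h)\<close>.
  Independence of the annexes makes the probability a product, so a point of \<open>B\<^sub>k\<close>
  contributes \<open>1 - \<pi>'\<^sup>s\<close>, \<open>\<pi>\<close> or \<open>\<pi> (1 - \<pi>'\<^sup>s)\<close> according to \<open>k = j\<close>, \<open>k \<in> I\<close> or neither;
  summing over the \<open>n\<close> blocks of size \<open>h\<close> gives the formula. In the limit
  \<open>\<pi> \<rightarrow> 0\<close> and \<open>s \<pi> \<rightarrow> \<alpha> \<beta>\<close>, hence \<open>\<pi>'\<^sup>s \<rightarrow> exp (- \<alpha> \<beta>)\<close>.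
\<close>

lemma base_Suc: "base h (Suc k) = {k * h + 1 .. k * h + h}"
  by (simp add: base_def algebra_simps)

lemma finite_base [simp]: "finite (base h i)"
  by (simp add: base_def)

lemma card_base: "i \<ge> 1 \<Longrightarrow> card (base h i) = h"
  by (cases i) (auto simp: base_Suc)

lemma base_disjoint:
  assumes "i \<ge> 1" "k \<ge> 1" "i \<noteq> k"
  shows "base h i \<inter> base h k = {}"
proof -
  have "base h i \<inter> base h k = {}" if "i < k" for i k
  proof -
    have ik: "i * h \<le> (k - 1) * h" using that by (intro mult_le_mono1) auto
    have False if "x \<in> base h i" "x \<in> base h k" for x
    proof -
      have "x \<le> i * h" "(k - 1) * h < x" using that by (auto simp: base_def)
      with ik show False by linarith
    qed
    thus ?thesis by blast
  qed
  thus ?thesis using assms by (metis Int_commute linorder_neqE_nat)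
qed

lemma ground_Suc: "ground (Suc n) h = ground n h \<union> base h (Suc n)"
  by (auto simp: ground_def base_Suc)

lemma ground_eq_UN_base: "ground n h = (\<Union>i\<in>{1..n}. base h i)"
proof (induction n)
  case 0
  show ?case by (simp add: ground_def)
next
  case (Suc n)
  have "{1..Suc n} = insert (Suc n) {1..n}" by auto
  thus ?case by (simp add: ground_Suc Suc Un_commute)
qed

lemma base_subset_ground: "i \<in> {1..n} \<Longrightarrow> base h i \<subseteq> ground n h"
  by (auto simp: ground_eq_UN_base)

lemma card_ground_diff_base:
  assumes "i \<in> {1..n}"
  shows "card (ground n h - base h i) = (n - 1) * h"
  using base_subset_ground[OF assms] card_base[of i h] assms
  by (simp add: card_Diff_subset ground_def diff_mult_distrib)

lemma card_subsets_containing: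
  assumes "finite D" "p \<in> D" "0 < l"
  shows "card {S. S \<subseteq> D \<and> card S = l \<and> p \<in> S} = (card D - 1) choose (l - 1)"
proof -
  have "{S. S \<subseteq> D \<and> card S = l \<and> p \<in> S} = insert p ` {T. T \<subseteq> D - {p} \<and> card T = l - 1}"
  proof (intro equalityI subsetI)
    fix S assume S: "S \<in> {S. S \<subseteq> D \<and> card S = l \<and> p \<in> S}"
    hence "finite S" using assms(1) finite_subset by blast
    with S assms(3) have "S = insert p (S - {p})" "card (S - {p}) = l - 1" by auto
    with S show "S \<in> insert p ` {T. T \<subseteq> D - {p} \<and> card T = l - 1}" by blast
  next
    fix S assume "S \<in> insert p ` {T. T \<subseteq> D - {p} \<and> card T = l - 1}"
    then obtain T where T: "T \<subseteq> D - {p}" "card T = l - 1" "S = insert p T" by blast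
    have "finite T" "p \<notin> T" using T(1) assms(1) finite_subset by auto
    with T assms show "S \<in> {S. S \<subseteq> D \<and> card S = l \<and> p \<in> S}" by auto
  qed
  moreover have "inj_on (insert p) {T. T \<subseteq> D - {p} \<and> card T = l - 1}"
    by (rule inj_onI) (metis Diff_insert_absorb subset_Diff_insert mem_Collect_eq)
  ultimately show ?thesis
    using assms by (simp add: card_image n_subsets)
qed

lemma expectation_uniform_subset_contains:
  assumes "finite D" "p \<in> D" "l \<le> card D"
  shows "measure_pmf.expectation (pmf_of_set {S. S \<subseteq> D \<and> card S = l})
           (\<lambda>S. of_bool (p \<in> S)) = real l / real (card D)"
proof -
  define X where "X = {S. S \<subseteq> D \<and> card S = l}"
  have fin: "finite X" using assms(1) by (simp add: X_def)
  have card_X: "card X = card D choose l" using assms(1) by (simp add: X_def n_subsets)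
  have "X \<noteq> {}" using card_X assms(3) by (metis card.empty binomial_eq_0_iff not_less)
  have "real (card (X \<inter> {S. p \<in> S})) = real l / real (card D) * real (card X)"
  proof (cases l)
    case 0
    hence "X \<inter> {S. p \<in> S} = {}" using assms(1) by (auto simp: X_def dest: finite_subset)
    thus ?thesis using 0 by simp
  next
    case (Suc l')
    obtain m where m: "card D = Suc m" using assms by (cases "card D") auto
    have "X \<inter> {S. p \<in> S} = {S. S \<subseteq> D \<and> card S = l \<and> p \<in> S}" by (auto simp: X_def)
    hence "card (X \<inter> {S. p \<in> S}) = m choose l'"
      using card_subsets_containing[OF assms(1,2)] Suc m by simp
    moreover have "real (Suc m) * real (m choose l') = real (Suc m choose Suc l') * real (Suc l')"
      using Suc_times_binomial_eq[of m l'] by (metis of_nat_mult)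
    ultimately show ?thesis using card_X Suc m by (simp add: field_simps)
  qed
  with fin \<open>X \<noteq> {}\<close> show ?thesis
    by (simp add: X_def[symmetric] integral_pmf_of_set card_gt_0_iff)
qed

lemma prod_of_bool_eq:
  "finite A \<Longrightarrow> (\<Prod>x\<in>A. of_bool (P x) :: 'b :: comm_semiring_1) = of_bool (\<forall>x\<in>A. P x)"
  by (induction A rule: finite_induct) auto

lemma expectation_of_bool_not:
  "measure_pmf.expectation M (\<lambda>x. of_bool (\<not> P x) :: real)
     = 1 - measure_pmf.expectation M (\<lambda>x. of_bool (P x))"
proof -
  have "(\<lambda>x. of_bool (\<not> P x) :: real) = indicator (space M - {x. P x})"
       "(\<lambda>x. of_bool (P x) :: real) = indicator {x. P x}"
    by (auto simp: indicator_def fun_eq_iff)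
  thus ?thesis using measure_pmf.prob_compl[of "{x. P x}" M] by simp
qed

lemma expectation_prod_Pi_pmf_subset:
  fixes f :: "'a \<Rightarrow> 'b \<Rightarrow> real"
  assumes "finite A" "K \<subseteq> A"
    and "\<And>x. x \<in> K \<Longrightarrow> integrable (measure_pmf (p x)) (f x)"
    and "\<And>x y. x \<in> K \<Longrightarrow> y \<in> set_pmf (p x) \<Longrightarrow> f x y \<ge> 0"
  shows "measure_pmf.expectation (Pi_pmf A dflt p) (\<lambda>y. \<Prod>x\<in>K. f x (y x))
           = (\<Prod>x\<in>K. measure_pmf.expectation (p x) (f x))"
proof -
  define g where "g x = (if x \<in> K then f x else (\<lambda>_. 1))" for x
  have "(\<Prod>x\<in>K. f x (y x)) = (\<Prod>x\<in>A. g x (y x))" for y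
    using assms(1,2) by (intro prod.mono_neutral_cong_left) (auto simp: g_def)
  moreover have "(\<Prod>x\<in>A. measure_pmf.expectation (p x) (g x))
      = (\<Prod>x\<in>K. measure_pmf.expectation (p x) (f x))"
    using assms(1,2) by (intro prod.mono_neutral_cong_right) (auto simp: g_def)
  ultimately show ?thesis
    using expectation_prod_Pi_pmf[OF assms(1), of p g dflt] assms(3,4) by (simp add: g_def)
qed

definition cover_prob :: "nat \<Rightarrow> nat \<Rightarrow> nat \<Rightarrow> nat \<Rightarrow> nat \<Rightarrow> real" where
  "cover_prob n h l p i = (if p \<in> base h i then 1 else real l / (real (n - 1) * real h))"

lemma set_pmf_annex_pmf:
  assumes "i \<in> {1..n}" "l \<le> (n - 1) * h"
  shows "set_pmf (annex_pmf n h l i) = {S. S \<subseteq> ground n h - base h i \<and> card S = l}"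
proof -
  have "finite (ground n h - base h i)" by (simp add: ground_def)
  moreover have "{S. S \<subseteq> ground n h - base h i \<and> card S = l} \<noteq> {}"
  proof -
    obtain S where "S \<subseteq> ground n h - base h i" "card S = l"
      using obtain_subset_with_card_n[of l "ground n h - base h i"]
        card_ground_diff_base[OF assms(1)] assms(2) by metis
    thus ?thesis by blast
  qed
  ultimately show ?thesis by (simp add: annex_pmf_def)
qed

lemma finite_set_pmf_annexes_pmf:
  assumes "l \<le> (n - 1) * h"
  shows "finite (set_pmf (annexes_pmf n h l))"
proof -
  have "finite (set_pmf (annex_pmf n h l i))" if "i \<in> {1..n}" for i
    using set_pmf_annex_pmf[OF that assms] by (simp add: ground_def)
  thus ?thesis unfolding annexes_pmf_def set_Pi_pmf[OF finite_atLeastAtMost]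
    by (intro finite_PiE_dflt) auto
qed

lemma expectation_annex_covers:
  assumes "i \<in> {1..n}" "l \<le> (n - 1) * h" "p \<in> ground n h"
  shows "measure_pmf.expectation (annex_pmf n h l i) (\<lambda>S. of_bool (p \<in> base h i \<union> S))
           = cover_prob n h l p i"
proof (cases "p \<in> base h i")
  case False
  have "measure_pmf.expectation (annex_pmf n h l i) (\<lambda>S. of_bool (p \<in> S))
      = real l / real (card (ground n h - base h i))"
    unfolding annex_pmf_def using False assms card_ground_diff_base[OF assms(1)]
    by (intro expectation_uniform_subset_contains) (auto simp: ground_def)
  with False show ?thesis
    by (simp add: cover_prob_def card_ground_diff_base[OF assms(1)])
qed (simp add: cover_prob_def)

lemma expectation_point_in_overlap:
  assumes lm: "l \<le> (n - 1) * h" and I: "I \<subseteq> {1..n}" and j: "j \<in> {1..n} - I"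
    and p: "p \<in> ground n h"
  shows "measure_pmf.expectation (annexes_pmf n h l)
           (\<lambda>R. of_bool (p \<in> (\<Union>i\<in>I. gen h R i) \<inter> gen h R j))
         = cover_prob n h l p j * (1 - (\<Prod>i\<in>I. 1 - cover_prob n h l p i))"
proof -
  define covered where "covered x S = (p \<in> base h x \<union> S)" for x S
  define c :: "nat \<Rightarrow> nat set \<Rightarrow> real" where "c = (\<lambda>x S. of_bool (covered x S))"
  define d :: "nat \<Rightarrow> nat set \<Rightarrow> real"
    where "d = (\<lambda>x S. of_bool (if x = j then covered x S else \<not> covered x S))"
  have fin_I: "finite I" using I finite_subset by blast
  have "j \<notin> I" using j by blast
  \<comment> \<open>being in \<open>G\<^sub>j\<close> and some \<open>G\<^sub>i\<close> is being in \<open>G\<^sub>j\<close> but not in \<open>G\<^sub>j\<close> and no \<open>G\<^sub>i\<close>;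
    both events are products of independent coordinate events\<close>
  have indicator_eq: "of_bool (p \<in> (\<Union>i\<in>I. gen h R i) \<inter> gen h R j)
      = (\<Prod>x\<in>{j}. c x (R x)) - (\<Prod>x\<in>insert j I. d x (R x))" for R
  proof -
    have "(\<Prod>x\<in>insert j I. d x (R x))
        = of_bool (\<forall>x\<in>insert j I. if x = j then covered x (R x) else \<not> covered x (R x))"
      unfolding d_def using fin_I by (simp only: prod_of_bool_eq finite_insert)
    thus ?thesis using \<open>j \<notin> I\<close> by (auto simp: c_def covered_def gen_def)
  qed
  have fin_annex: "finite (set_pmf (annex_pmf n h l x))" if "x \<in> {1..n}" for x
    using set_pmf_annex_pmf[OF that lm] by (simp add: ground_def)
  have E_c: "measure_pmf.expectation (annex_pmf n h l x) (c x) = cover_prob n h l p x"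
    if "x \<in> {1..n}" for x
    using expectation_annex_covers[OF that lm p] by (simp add: c_def covered_def)
  have E_d: "measure_pmf.expectation (annex_pmf n h l x) (d x)
      = (if x = j then cover_prob n h l p x else 1 - cover_prob n h l p x)"
    if "x \<in> {1..n}" for x
    using E_c[OF that] expectation_of_bool_not[of "annex_pmf n h l x" "covered x"]
    by (cases "x = j") (simp_all add: c_def d_def)
  have E_prod: "measure_pmf.expectation (annexes_pmf n h l) (\<lambda>R. \<Prod>x\<in>K. f x (R x))
      = (\<Prod>x\<in>K. measure_pmf.expectation (annex_pmf n h l x) (f x))"
    if "K \<subseteq> {1..n}" "\<And>x S. f x S \<ge> 0" for K and f :: "nat \<Rightarrow> nat set \<Rightarrow> real"
    unfolding annexes_pmf_def using that fin_annex
    by (intro expectation_prod_Pi_pmf_subset integrable_measure_pmf_finite) auto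
  have "measure_pmf.expectation (annexes_pmf n h l)
          (\<lambda>R. of_bool (p \<in> (\<Union>i\<in>I. gen h R i) \<inter> gen h R j))
      = measure_pmf.expectation (annexes_pmf n h l) (\<lambda>R. \<Prod>x\<in>{j}. c x (R x))
        - measure_pmf.expectation (annexes_pmf n h l) (\<lambda>R. \<Prod>x\<in>insert j I. d x (R x))"
    unfolding indicator_eq using finite_set_pmf_annexes_pmf[OF lm]
    by (intro Bochner_Integration.integral_diff integrable_measure_pmf_finite)
  also have "\<dots> = cover_prob n h l p j
      - cover_prob n h l p j * (\<Prod>i\<in>I. 1 - cover_prob n h l p i)"
  proof -
    have "(\<Prod>x\<in>I. measure_pmf.expectation (annex_pmf n h l x) (d x))
        = (\<Prod>i\<in>I. 1 - cover_prob n h l p i)"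
      using I \<open>j \<notin> I\<close> E_d by (intro prod.cong) auto
    thus ?thesis
      using E_prod[of "{j}" c] E_prod[of "insert j I" d] E_c E_d j I fin_I \<open>j \<notin> I\<close>
      by (simp add: c_def d_def)
  qed
  finally show ?thesis by (simp add: algebra_simps)
qed

lemma Omega_eq_sum_points:
  assumes lm: "l \<le> (n - 1) * h" and I: "I \<subseteq> {1..n}" and j: "j \<in> {1..n} - I"
  shows "Omega n h l I j
    = (\<Sum>p\<in>ground n h. cover_prob n h l p j * (1 - (\<Prod>i\<in>I. 1 - cover_prob n h l p i)))"
proof -
  have gen_subset: "gen h R j \<subseteq> ground n h" if "R \<in> set_pmf (annexes_pmf n h l)" for R
  proof -
    have "R j \<in> set_pmf (annex_pmf n h l j)"
      using that j by (auto simp: annexes_pmf_def set_Pi_pmf PiE_dflt_def)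
    thus ?thesis
      using set_pmf_annex_pmf[OF _ lm, of j] base_subset_ground[of j n h] j by (auto simp: gen_def)
  qed
  have "Omega n h l I j = measure_pmf.expectation (annexes_pmf n h l)
      (\<lambda>R. \<Sum>p\<in>ground n h. of_bool (p \<in> (\<Union>i\<in>I. gen h R i) \<inter> gen h R j))"
  proof (unfold Omega_def, intro integral_cong_AE AE_pmfI)
    fix R assume "R \<in> set_pmf (annexes_pmf n h l)"
    hence "ground n h \<inter> {p. p \<in> (\<Union>i\<in>I. gen h R i) \<inter> gen h R j}
        = (\<Union>i\<in>I. gen h R i) \<inter> gen h R j"
      using gen_subset by blast
    moreover have "finite (ground n h)" by (simp add: ground_def)
    ultimately show "real (card ((\<Union>i\<in>I. gen h R i) \<inter> gen h R j))
        = (\<Sum>p\<in>ground n h. of_bool (p \<in> (\<Union>i\<in>I. gen h R i) \<inter> gen h R j))"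
      by simp
  qed simp_all
  also have "\<dots> = (\<Sum>p\<in>ground n h. measure_pmf.expectation (annexes_pmf n h l)
      (\<lambda>R. of_bool (p \<in> (\<Union>i\<in>I. gen h R i) \<inter> gen h R j)))"
    by (intro Bochner_Integration.integral_sum integrable_measure_pmf_finite
        finite_set_pmf_annexes_pmf[OF lm])
  also have "\<dots> = (\<Sum>p\<in>ground n h.
      cover_prob n h l p j * (1 - (\<Prod>i\<in>I. 1 - cover_prob n h l p i)))"
    using expectation_point_in_overlap[OF lm I j] by simp
  finally show ?thesis .
qed

lemma cover_prob_base:
  assumes "k \<ge> 1" "i \<ge> 1" "p \<in> base h k"
  shows "cover_prob n h l p i = (if i = k then 1 else real l / (real (n - 1) * real h))"
  using base_disjoint[of i k h] assms by (auto simp: cover_prob_def)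

lemma sum_three_valued:
  assumes "finite A" "j \<in> A" "I \<subseteq> A" "j \<notin> I"
  shows "(\<Sum>k\<in>A. (if k = j then x else if k \<in> I then y else z :: real))
       = x + real (card I) * y + (real (card A) - 1 - real (card I)) * z"
proof -
  have fin_I: "finite I" using assms finite_subset by blast
  have A_split: "A = insert j (I \<union> (A - insert j I))" using assms by auto
  have card_rest: "card (A - insert j I) = card A - Suc (card I)" "Suc (card I) \<le> card A"
    using assms fin_I card_mono[OF assms(1), of "insert j I"] by (auto simp: card_Diff_subset)
  let ?g = "\<lambda>k. if k = j then x else if k \<in> I then y else z"
  have "(\<Sum>k\<in>A. ?g k) = ?g j + (\<Sum>k\<in>I \<union> (A - insert j I). ?g k)"
    using assms fin_I by (subst A_split, subst sum.insert) auto
  also have "(\<Sum>k\<in>I \<union> (A - insert j I). ?g k) = (\<Sum>k\<in>I. ?g k) + (\<Sum>k\<in>A - insert j I. ?g k)"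
    using assms fin_I by (intro sum.union_disjoint) auto
  also have "(\<Sum>k\<in>I. ?g k) = (\<Sum>k\<in>I. y)"
    using assms by (intro sum.cong) auto
  also have "(\<Sum>k\<in>A - insert j I. ?g k) = (\<Sum>k\<in>A - insert j I. z)"
    by (intro sum.cong) auto
  finally have "(\<Sum>k\<in>A. ?g k) = x + real (card I) * y + real (card (A - insert j I)) * z"
    by simp
  thus ?thesis using card_rest by (simp add: of_nat_diff)
qed

lemma Omega_closed_form:
  assumes n: "n \<ge> 2" and h: "h \<ge> 1" and lm: "l \<le> (n - 1) * h"
    and I: "I \<subseteq> {1..n}" and j: "j \<in> {1..n} - I"
  defines "\<pi> \<equiv> real l / (real (n - 1) * real h)"
  shows "Omega n h l I j
    = real (h + l) * (1 - (1 - \<pi>) ^ card I) + real (card I) * real h * \<pi> * (1 - \<pi>) ^ card I"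
proof -
  define s where "s = card I"
  define q where "q = (1 - \<pi>) ^ s"
  define t where "t k = (if k = j then 1 - q else if k \<in> I then \<pi> else \<pi> * (1 - q))" for k
  have fin_I: "finite I" using I finite_subset by blast
  have block_term: "cover_prob n h l p j * (1 - (\<Prod>i\<in>I. 1 - cover_prob n h l p i)) = t k"
    if k: "k \<in> {1..n}" and p: "p \<in> base h k" for k p
  proof -
    have cover: "cover_prob n h l p i = (if i = k then 1 else \<pi>)" if "i \<in> {1..n}" for i
      using cover_prob_base[OF _ _ p] k that by (simp add: \<pi>_def)
    have "(\<Prod>i\<in>I. 1 - cover_prob n h l p i) = (if k \<in> I then 0 else q)"
    proof (cases "k \<in> I")
      case True
      have "1 - cover_prob n h l p k = 0" using cover k by simp
      with True fin_I show ?thesis by auto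
    next
      case False
      hence "(\<Prod>i\<in>I. 1 - cover_prob n h l p i) = (\<Prod>i\<in>I. 1 - \<pi>)"
        using cover I by (intro prod.cong) auto
      thus ?thesis using False by (simp add: q_def s_def)
    qed
    thus ?thesis using cover[of j] j by (auto simp: t_def)
  qed
  have "Omega n h l I j = (\<Sum>k\<in>{1..n}. \<Sum>p\<in>base h k.
      cover_prob n h l p j * (1 - (\<Prod>i\<in>I. 1 - cover_prob n h l p i)))"
  proof -
    have "\<forall>i\<in>{1..n}. \<forall>k\<in>{1..n}. i \<noteq> k \<longrightarrow> base h i \<inter> base h k = {}"
      using base_disjoint by auto
    thus ?thesis unfolding Omega_eq_sum_points[OF lm I j] ground_eq_UN_base
      by (intro sum.UNION_disjoint) auto
  qed
  also have "\<dots> = (\<Sum>k\<in>{1..n}. real h * t k)"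
    using block_term card_base by (intro sum.cong) auto
  also have "\<dots> = real h * ((1 - q) + real s * \<pi> + (real n - 1 - real s) * (\<pi> * (1 - q)))"
    unfolding t_def sum_distrib_left[symmetric] using I j
    by (subst sum_three_valued) (auto simp: s_def)
  also have "\<dots> = real h * (1 - q) + (real n - 1) * real h * \<pi> * (1 - q) + real s * real h * \<pi> * q"
    by (simp add: algebra_simps)
  also have "(real n - 1) * real h * \<pi> = real l"
    using n h by (simp add: \<pi>_def)
  finally show ?thesis by (simp add: q_def s_def algebra_simps)
qed

lemma tendsto_one_minus_power_exp:
  fixes x :: "nat \<Rightarrow> real" and s :: "nat \<Rightarrow> nat"
  assumes x: "x \<longlonglongrightarrow> 0" and sx: "(\<lambda>k. real (s k) * x k) \<longlonglongrightarrow> c"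
  shows "(\<lambda>k. (1 - x k) ^ s k) \<longlonglongrightarrow> exp (- c)"
proof -
  define L where "L k = real (s k) * ln (1 - x k)" for k
  have small: "eventually (\<lambda>k. \<bar>x k\<bar> < 1/2) sequentially"
    using order_tendstoD(2)[OF tendsto_rabs_zero[OF x], of "1/2"] by simp
  have "eventually (\<lambda>k. norm (L k + real (s k) * x k) \<le> 2 * (real (s k) * x k) * x k)
      sequentially"
    using small
  proof eventually_elim
    case (elim k)
    have "\<bar>ln (1 + - x k) - - x k\<bar> \<le> 2 * (- x k)\<^sup>2"
      using elim by (intro abs_ln_one_plus_x_minus_x_bound) simp
    hence "real (s k) * \<bar>ln (1 - x k) + x k\<bar> \<le> real (s k) * (2 * (x k)\<^sup>2)"
      by (intro mult_left_mono) auto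
    moreover have "L k + real (s k) * x k = real (s k) * (ln (1 - x k) + x k)"
      by (simp add: L_def algebra_simps)
    ultimately show ?case by (simp add: abs_mult power2_eq_square mult_ac)
  qed
  moreover have "(\<lambda>k. 2 * (real (s k) * x k) * x k) \<longlonglongrightarrow> 0"
    using tendsto_mult[OF tendsto_mult[OF tendsto_const sx] x, of 2] by simp
  ultimately have "(\<lambda>k. L k + real (s k) * x k) \<longlonglongrightarrow> 0"
    by (rule Lim_null_comparison)
  hence "(\<lambda>k. (L k + real (s k) * x k) - real (s k) * x k) \<longlonglongrightarrow> 0 - c"
    by (intro tendsto_diff sx)
  hence "(\<lambda>k. exp (L k)) \<longlonglongrightarrow> exp (- c)"
    by (intro tendsto_exp) simp
  moreover have "eventually (\<lambda>k. exp (L k) = (1 - x k) ^ s k) sequentially"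
    using small by eventually_elim (simp add: L_def exp_of_nat_mult)
  ultimately show ?thesis
    by (rule Lim_transform_eventually)
qed

lemma Omega_tendsto:
  fixes n h l :: "nat \<Rightarrow> nat" and I :: "nat \<Rightarrow> nat set" and j :: "nat \<Rightarrow> nat"
  assumes size: "\<And>k. n k \<ge> 2" "\<And>k. h k \<ge> 1" "\<And>k. l k \<le> (n k - 1) * h k"
    and index: "\<And>k. I k \<subseteq> {1..n k}" "\<And>k. j k \<in> {1..n k} - I k"
    and n: "filterlim n at_top sequentially"
    and \<alpha>: "(\<lambda>k. real (l k) / real (h k)) \<longlonglongrightarrow> \<alpha>"
    and \<beta>: "(\<lambda>k. real (card (I k)) / real (n k)) \<longlonglongrightarrow> \<beta>"
  shows "(\<lambda>k. Omega (n k) (h k) (l k) (I k) (j k) / real (h k)) \<longlonglongrightarrow>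
           (1 + \<alpha>) * (1 - exp (- \<alpha> * \<beta>)) + \<alpha> * \<beta> * exp (- \<alpha> * \<beta>)"
proof -
  define x where "x k = real (l k) / real (h k)" for k
  define \<pi> where "\<pi> k = real (l k) / (real (n k - 1) * real (h k))" for k
  define s where "s k = card (I k)" for k
  have real_n_minus_1: "real (n k - 1) = real (n k) - 1" for k
    using size(1)[of k] by (simp add: of_nat_diff)
  have Omega_div: "Omega (n k) (h k) (l k) (I k) (j k) / real (h k)
      = (1 + x k) * (1 - (1 - \<pi> k) ^ s k) + real (s k) * \<pi> k * (1 - \<pi> k) ^ s k" for k
    using Omega_closed_form[OF size index, of k] size(2)[of k]
    by (simp add: x_def \<pi>_def s_def field_simps)
  have "(\<lambda>k. real (n k - 1)) = (\<lambda>k. -1 + real (n k))"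
    using real_n_minus_1 by (simp add: fun_eq_iff)
  hence n_minus_1: "filterlim (\<lambda>k. real (n k - 1)) at_top sequentially"
    by (simp only:) (intro filterlim_tendsto_add_at_top[OF tendsto_const]
        filterlim_compose[OF filterlim_real_sequentially n])
  have \<pi>_eq: "\<pi> k = x k / real (n k - 1)" for k
    by (simp add: \<pi>_def x_def)
  have \<pi>: "\<pi> \<longlonglongrightarrow> 0"
    unfolding \<pi>_eq[abs_def] x_def
    by (rule tendsto_divide_0[OF \<alpha> filterlim_at_top_imp_at_infinity[OF n_minus_1]])
  have s\<pi>_eq: "real (s k) * \<pi> k
      = real (card (I k)) / real (n k) * (1 + 1 / real (n k - 1)) * x k" for k
    using size(1,2)[of k] by (simp add: \<pi>_def x_def s_def real_n_minus_1 field_simps)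
  have s\<pi>: "(\<lambda>k. real (s k) * \<pi> k) \<longlonglongrightarrow> \<alpha> * \<beta>"
  proof -
    have "(\<lambda>k. real (s k) * \<pi> k) \<longlonglongrightarrow> \<beta> * (1 + 0) * \<alpha>"
      unfolding s\<pi>_eq x_def
      by (intro tendsto_mult tendsto_add tendsto_const \<alpha> \<beta>
          tendsto_divide_0[OF tendsto_const filterlim_at_top_imp_at_infinity[OF n_minus_1]])
    thus ?thesis by (simp add: mult.commute)
  qed
  have q: "(\<lambda>k. (1 - \<pi> k) ^ s k) \<longlonglongrightarrow> exp (- \<alpha> * \<beta>)"
    using tendsto_one_minus_power_exp[OF \<pi> s\<pi>] by simp
  have "(\<lambda>k. (1 + x k) * (1 - (1 - \<pi> k) ^ s k) + real (s k) * \<pi> k * (1 - \<pi> k) ^ s k)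
      \<longlonglongrightarrow> (1 + \<alpha>) * (1 - exp (- \<alpha> * \<beta>)) + \<alpha> * \<beta> * exp (- \<alpha> * \<beta>)"
    unfolding x_def by (intro tendsto_add tendsto_mult tendsto_diff tendsto_const \<alpha> q s\<pi>)
  thus ?thesis by (simp only: Omega_div)
qed

theorem theorem7:
  shows
  "(\<forall>(n::nat) (h::nat) (l::nat) (I::nat set) (j::nat).
      n \<ge> 2 \<longrightarrow> h \<ge> 1 \<longrightarrow> l \<le> (n - 1) * h \<longrightarrow>
      I \<subseteq> {1..n} \<longrightarrow> j \<in> {1..n} - I \<longrightarrow>
      (let g = real (h + l); \<pi> = real l / (real (n - 1) * real h); \<pi>' = 1 - \<pi>;
           s = card I
       in Omega n h l I j = g * (1 - \<pi>' ^ s) + real s * real h * \<pi> * \<pi>' ^ s))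
   \<and>
   (\<forall>(n::nat \<Rightarrow> nat) (h::nat \<Rightarrow> nat) (l::nat \<Rightarrow> nat) (I::nat \<Rightarrow> nat set)
      (j::nat \<Rightarrow> nat) (\<alpha>::real) (\<beta>::real).
      (\<forall>k. n k \<ge> 2 \<and> h k \<ge> 1 \<and> l k \<le> (n k - 1) * h k \<and>
           I k \<subseteq> {1..n k} \<and> j k \<in> {1..n k} - I k) \<longrightarrow>
      filterlim n at_top sequentially \<longrightarrow>
      (\<lambda>k. real (l k) / real (h k)) \<longlonglongrightarrow> \<alpha> \<longrightarrow>
      (\<lambda>k. real (card (I k)) / real (n k)) \<longlonglongrightarrow> \<beta> \<longrightarrow>
      (\<lambda>k. Omega (n k) (h k) (l k) (I k) (j k) / real (h k)) \<longlonglongrightarrow>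
        (1 + \<alpha>) * (1 - exp (- \<alpha> * \<beta>)) + \<alpha> * \<beta> * exp (- \<alpha> * \<beta>))"
  (is "?closed_form \<and> ?limit")
proof
  show ?closed_form
    using Omega_closed_form by (simp add: Let_def)
  show ?limit
  proof (intro allI impI)
    fix n h l :: "nat \<Rightarrow> nat" and I :: "nat \<Rightarrow> nat set" and j :: "nat \<Rightarrow> nat"
      and \<alpha> \<beta> :: real
    assume "\<forall>k. n k \<ge> 2 \<and> h k \<ge> 1 \<and> l k \<le> (n k - 1) * h k \<and>
           I k \<subseteq> {1..n k} \<and> j k \<in> {1..n k} - I k"
      and "filterlim n at_top sequentially"
      and "(\<lambda>k. real (l k) / real (h k)) \<longlonglongrightarrow> \<alpha>"
      and "(\<lambda>k. real (card (I k)) / real (n k)) \<longlonglongrightarrow> \<beta>"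
    thus "(\<lambda>k. Omega (n k) (h k) (l k) (I k) (j k) / real (h k)) \<longlonglongrightarrow>
        (1 + \<alpha>) * (1 - exp (- \<alpha> * \<beta>)) + \<alpha> * \<beta> * exp (- \<alpha> * \<beta>)"
      by (intro Omega_tendsto) blast+
  qed
qed

end
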